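(* For every positive integer $t$ there is a constant $c(t)>0$ such that the following holds. Let $d\ge1$, $U=\{u_1,\dots,u_d\}$ the vertex set of a complete graph, $L$ a $t$-feasible list assignment of $U$, and let $A$ be the set of constrained vertices $u$ with $|L(u)|\le 2(3t+2)$. Let $\alpha,\beta\in\Omega^L_U$ and let $\xi_A$ be an injective map $A\to[d+1]$ with $\xi_A(u)\in L(u)$ for all $u\in A$, such that $\alpha|_A$ and $\xi_A$ differ on at most one vertex, and $\xi_A$ and $\beta|_A$ differ on at most one vertex. Then there are at least $c(t)|\Omega^L_U|$ colourings $\xi\in\Omega^L_U$ with $\xi|_A=\xi_A$ such that both $(\alpha,\xi)$ and $(\xi,\beta)$ are good pairs.
   Context: Lists $L(u)\subseteq[d+1]$; an $L$-colouring is an injective $\alpha:U\to[d+1]$ with $\alpha(u)\in L(u)$; $\Omega^L_U$ is their set. $L$ is $t$-feasible if $|L(u_i)|\ge t+1$ for $i\in[t]$ and $|L(u_i)|=d+1$ for $i\in[d]\setminus[t]$. A vertex $u$ is free if $|L(u)|=d+1$ and constrained otherwise. Add an extra vertex $w$ (regarded as free) and extend each $\alpha\in\Omega^L_U$ by letting $\alpha(w)$ be the unique colour of $[d+1]$ not in $\alpha(U)$. For $\alpha,\beta\in\Omega^L_U$ let $f(\alpha,\beta)$ be the permutation of $U\cup\{w\}$ with $f(x)=y$ iff $\alpha(x)=\beta(y)$; $(\alpha,\beta)$ is a good pair if $f(\alpha,\beta)$ has no cycle of length at least $2$ all of whose vertices are constrained. *)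

theory Defs
  imports Complex_Main "HOL-Library.FuncSet"
begin

text \<open>Vertices u_1..u_d are the naturals 1..d; the extra vertex w is 0.
  Colours are [d+1] = {1..d+1}. A list assignment is L :: nat => nat set.\<close>

definition t_feasible :: "nat \<Rightarrow> nat \<Rightarrow> (nat \<Rightarrow> nat set) \<Rightarrow> bool" where
  "t_feasible d t L \<longleftrightarrow>
     (\<forall>i\<in>{1..d}. L i \<subseteq> {1..d+1}) \<and>
     (\<forall>i\<in>{1..d}. i \<le> t \<longrightarrow> card (L i) \<ge> t + 1) \<and>
     (\<forall>i\<in>{1..d}. t < i \<longrightarrow> card (L i) = d + 1)"

definition L_colourings :: "nat \<Rightarrow> (nat \<Rightarrow> nat set) \<Rightarrow> (nat \<Rightarrow> nat) set" where
  "L_colourings d L = {\<alpha>. \<alpha> \<in> {1..d} \<rightarrow>\<^sub>E {1..d+1} \<and> inj_on \<alpha> {1..d} \<and>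
                          (\<forall>u\<in>{1..d}. \<alpha> u \<in> L u)}"

definition constrained :: "nat \<Rightarrow> (nat \<Rightarrow> nat set) \<Rightarrow> nat \<Rightarrow> bool" where
  "constrained d L u \<longleftrightarrow> u \<in> {1..d} \<and> card (L u) \<noteq> d + 1"

definition ext_col :: "nat \<Rightarrow> (nat \<Rightarrow> nat) \<Rightarrow> nat \<Rightarrow> nat" where
  "ext_col d \<alpha> x = (if x = 0 then (THE c. c \<in> {1..d+1} - \<alpha> ` {1..d}) else \<alpha> x)"

definition perm_f :: "nat \<Rightarrow> (nat \<Rightarrow> nat) \<Rightarrow> (nat \<Rightarrow> nat) \<Rightarrow> nat \<Rightarrow> nat" where
  "perm_f d \<alpha> \<beta> x = (THE y. y \<in> {0..d} \<and> ext_col d \<alpha> x = ext_col d \<beta> y)"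

definition good_pair :: "nat \<Rightarrow> (nat \<Rightarrow> nat set) \<Rightarrow> (nat \<Rightarrow> nat) \<Rightarrow> (nat \<Rightarrow> nat) \<Rightarrow> bool" where
  "good_pair d L \<alpha> \<beta> \<longleftrightarrow>
     \<not> (\<exists>x\<in>{0..d}. perm_f d \<alpha> \<beta> x \<noteq> x \<and>
          (\<forall>k. constrained d L ((perm_f d \<alpha> \<beta> ^^ k) x)))"

end

theory Submission
  imports Defs
begin

(*
  Let C be the set of constrained vertices (at most t of them, by t-feasibility), B = C - A the
  constrained vertices with long lists, and S the at most 3t colours used by alpha and beta on C
  and by xi_A on A. Every colouring xi that extends xi_A and avoids S on B is good for both pairs:
  consecutive constrained vertices z, f z on a cycle of f(alpha, xi) satisfy alpha z = xi (f z),
  so f z cannot lie in B, and similarly xi z = beta (f z) forces z into A for f(xi, beta). A cycle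
  of length at least 2 inside A consists of vertices where the two colourings disagree, and there
  is at most one such vertex.

  For the count, every colouring of C has the same number N of extensions to all of U, because
  the free vertices have full lists. Hence |Omega| <= N * prod_{u in C} |L u|, while the good
  extensions number at least N * prod_{b in B} (|L b| - |S| - t) >= N * 3^-t * prod_{b in B} |L b|,
  as |L b| > 6t + 4; the lists on A contribute at most (6t + 4)^t.
*)

definition list_colourings :: "'a set \<Rightarrow> ('a \<Rightarrow> 'b set) \<Rightarrow> 'b set \<Rightarrow> ('a \<Rightarrow> 'b) set" where
  "list_colourings V L Y = {\<phi> \<in> V \<rightarrow>\<^sub>E Y. inj_on \<phi> V \<and> (\<forall>v\<in>V. \<phi> v \<in> L v)}"

lemma L_colourings_eq_list_colourings: "L_colourings d L = list_colourings {1..d} L {1..d+1}"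
  by (simp add: L_colourings_def list_colourings_def)

lemma list_colourings_eq_PiE: "list_colourings V L Y = {\<phi> \<in> (\<Pi>\<^sub>E v\<in>V. L v \<inter> Y). inj_on \<phi> V}"
  by (auto simp: list_colourings_def PiE_iff)

lemma finite_list_colourings: "finite V \<Longrightarrow> finite Y \<Longrightarrow> finite (list_colourings V L Y)"
  unfolding list_colourings_def by (rule finite_subset[of _ "V \<rightarrow>\<^sub>E Y"]) (auto intro: finite_PiE)

lemma list_colourings_mono: "Y' \<subseteq> Y \<Longrightarrow> list_colourings V L Y' \<subseteq> list_colourings V L Y"
  by (auto simp: list_colourings_def PiE_iff)

lemma restrict_in_list_colourings:
  assumes "\<alpha> \<in> list_colourings V L Y" "W \<subseteq> V"
  shows "restrict \<alpha> W \<in> list_colourings W L (Y - \<alpha> ` (V - W))"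
proof -
  have \<alpha>: "\<alpha> \<in> V \<rightarrow>\<^sub>E Y" "inj_on \<alpha> V" "\<forall>v\<in>V. \<alpha> v \<in> L v"
    using assms(1) by (simp_all add: list_colourings_def)
  have "\<alpha> w \<notin> \<alpha> ` (V - W)" if "w \<in> W" for w
    using that assms(2) inj_on_image_mem_iff[OF \<alpha>(2)] by blast
  then have "\<alpha> \<in> W \<rightarrow> Y - \<alpha> ` (V - W)" using \<alpha>(1) assms(2) by auto
  moreover have "inj_on \<alpha> W" using \<alpha>(2) assms(2) by (rule inj_on_subset)
  ultimately show ?thesis using \<alpha>(3) assms(2) by (auto simp: list_colourings_def)
qed

lemma override_on_in_list_colourings:
  assumes "\<phi> \<in> list_colourings A L Y" "\<psi> \<in> list_colourings B L (Y - \<phi> ` A)"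
  shows "override_on \<psi> \<phi> A \<in> list_colourings (A \<union> B) L Y"
proof -
  have \<phi>: "\<phi> \<in> A \<rightarrow>\<^sub>E Y" "inj_on \<phi> A" "\<forall>a\<in>A. \<phi> a \<in> L a"
    and \<psi>: "\<psi> \<in> B \<rightarrow>\<^sub>E Y - \<phi> ` A" "inj_on \<psi> B" "\<forall>b\<in>B. \<psi> b \<in> L b"
    using assms by (simp_all add: list_colourings_def)
  have "override_on \<psi> \<phi> A \<in> A \<union> B \<rightarrow>\<^sub>E Y"
  proof (rule PiE_I)
    show "override_on \<psi> \<phi> A x \<in> Y" if "x \<in> A \<union> B" for x
      using that \<phi>(1) \<psi>(1) by (cases "x \<in> A") auto
    show "override_on \<psi> \<phi> A x = undefined" if "x \<notin> A \<union> B" for x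
      using that PiE_arb[OF \<psi>(1)] by simp
  qed
  moreover have "inj_on (override_on \<psi> \<phi> A) (A \<union> B)"
  proof (rule inj_onI)
    fix x y assume "x \<in> A \<union> B" "y \<in> A \<union> B" "override_on \<psi> \<phi> A x = override_on \<psi> \<phi> A y"
    then show "x = y"
      using inj_onD[OF \<phi>(2)] inj_onD[OF \<psi>(2)] \<psi>(1)
      by (cases "x \<in> A"; cases "y \<in> A") (force simp: PiE_iff)+
  qed
  moreover have "\<forall>v\<in>A \<union> B. override_on \<psi> \<phi> A v \<in> L v"
    using \<phi>(3) \<psi>(3) by (auto simp: override_on_def)
  ultimately show ?thesis by (simp add: list_colourings_def)
qed

lemma card_list_colourings_le:
  assumes "finite V" "\<And>v. v \<in> V \<Longrightarrow> finite (L v)"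
  shows "card (list_colourings V L Y) \<le> (\<Prod>v\<in>V. card (L v))"
proof -
  have "list_colourings V L Y \<subseteq> Pi\<^sub>E V L"
    unfolding list_colourings_eq_PiE using PiE_mono[of V "\<lambda>v. L v \<inter> Y" L] by blast
  moreover have "finite (Pi\<^sub>E V L)" using assms by (rule finite_PiE)
  ultimately have "card (list_colourings V L Y) \<le> card (Pi\<^sub>E V L)" by (rule card_mono[rotated])
  then show ?thesis using assms(1) by (simp add: card_PiE)
qed

lemma card_Sigma_fresh_colour_le:
  assumes "finite V" "finite Y" "b \<notin> V"
  shows "card (SIGMA \<psi>:list_colourings V L Y. L b \<inter> Y - \<psi> ` V) \<le> card (list_colourings (insert b V) L Y)"
proof (rule card_inj_on_le)
  let ?pairs = "SIGMA \<psi>:list_colourings V L Y. L b \<inter> Y - \<psi> ` V"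
  show "(\<lambda>(\<psi>, c). \<psi>(b := c)) ` ?pairs \<subseteq> list_colourings (insert b V) L Y"
  proof
    fix \<eta> assume "\<eta> \<in> (\<lambda>(\<psi>, c). \<psi>(b := c)) ` ?pairs"
    then obtain \<psi> c where \<eta>: "\<eta> = \<psi>(b := c)" and "(\<psi>, c) \<in> ?pairs" by auto
    then have \<psi>: "\<psi> \<in> (\<Pi>\<^sub>E v\<in>V. L v \<inter> Y)" "inj_on \<psi> V" and c: "c \<in> L b \<inter> Y" "c \<notin> \<psi> ` V"
      by (auto simp: list_colourings_eq_PiE)
    have "inj_on (\<psi>(b := c)) (insert b V)"
      using \<psi>(2) c(2) assms(3) by (auto simp: inj_on_insert intro: inj_on_fun_updI)
    then show "\<eta> \<in> list_colourings (insert b V) L Y"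
      using \<psi> c by (simp add: \<eta> list_colourings_eq_PiE PiE_fun_upd)
  qed
  show "inj_on (\<lambda>(\<psi>, c). \<psi>(b := c)) ?pairs"
  proof (rule inj_on_inverseI[where g = "\<lambda>\<eta>. (\<eta>(b := undefined), \<eta> b)"])
    fix p assume "p \<in> ?pairs"
    then obtain \<psi> c where p: "p = (\<psi>, c)" and "\<psi> \<in> V \<rightarrow>\<^sub>E Y"
      by (cases p) (simp add: list_colourings_def)
    then have "\<psi> b = undefined" using PiE_arb assms(3) by metis
    then show "(\<lambda>\<eta>. (\<eta>(b := undefined), \<eta> b)) ((\<lambda>(\<psi>, c). \<psi>(b := c)) p) = p"
      by (simp add: p fun_upd_idem)
  qed
  show "finite (list_colourings (insert b V) L Y)"
    using assms by (simp add: finite_list_colourings)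
qed

lemma card_list_colourings_ge:
  assumes "finite V" "finite Y" "card V \<le> Suc n"
  shows "(\<Prod>v\<in>V. card (L v \<inter> Y) - n) \<le> card (list_colourings V L Y)"
  using assms
proof (induction V rule: finite_induct)
  case empty
  then show ?case by (simp add: list_colourings_def)
next
  case (insert b V)
  let ?\<Omega> = "list_colourings V L Y"
  have fresh: "card (L b \<inter> Y) - n \<le> card (L b \<inter> Y - \<psi> ` V)" for \<psi>
  proof -
    have "card (L b \<inter> Y) - n \<le> card (L b \<inter> Y) - card (\<psi> ` V)"
      using card_image_le[OF insert(1), of \<psi>] insert(1,2,5) by simp
    also have "\<dots> \<le> card (L b \<inter> Y - \<psi> ` V)" by (rule diff_card_le_card_Diff) (simp add: insert(1))
    finally show ?thesis .
  qed
  have "(\<Prod>v\<in>insert b V. card (L v \<inter> Y) - n) = (card (L b \<inter> Y) - n) * (\<Prod>v\<in>V. card (L v \<inter> Y) - n)"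
    using insert(1,2) by simp
  also have "\<dots> \<le> (card (L b \<inter> Y) - n) * card ?\<Omega>"
    using insert by (intro mult_le_mono2) simp
  also have "\<dots> \<le> (\<Sum>\<psi>\<in>?\<Omega>. card (L b \<inter> Y - \<psi> ` V))"
    using sum_mono[of ?\<Omega>, OF fresh] by (simp add: mult.commute)
  also have "\<dots> = card (SIGMA \<psi>:?\<Omega>. L b \<inter> Y - \<psi> ` V)"
    by (rule card_SigmaI [symmetric]) (use insert in \<open>auto simp: finite_list_colourings\<close>)
  also have "\<dots> \<le> card (list_colourings (insert b V) L Y)"
    using insert(1,4,2) by (rule card_Sigma_fresh_colour_le)
  finally show ?case .
qed

lemma bij_betw_restrict_extensions:
  assumes "C \<subseteq> V" and \<phi>: "\<phi> \<in> list_colourings C L Y"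
  shows "bij_betw (\<lambda>\<alpha>. restrict \<alpha> (V - C)) {\<alpha> \<in> list_colourings V L Y. restrict \<alpha> C = \<phi>}
    (list_colourings (V - C) L (Y - \<phi> ` C))"
proof (rule bij_betw_byWitness[where f' = "\<lambda>g. override_on g \<phi> C"])
  let ?F = "V - C" and ?T = "Y - \<phi> ` C"
  let ?fibre = "{\<alpha> \<in> list_colourings V L Y. restrict \<alpha> C = \<phi>}"
  show "\<forall>\<alpha>\<in>?fibre. override_on (restrict \<alpha> ?F) \<phi> C = \<alpha>"
  proof
    fix \<alpha> assume \<alpha>: "\<alpha> \<in> ?fibre"
    then have "\<alpha> \<in> V \<rightarrow>\<^sub>E Y" by (simp add: list_colourings_def)
    then have "\<alpha> x = undefined" if "x \<notin> V" for x using that by (rule PiE_arb)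
    moreover have "\<phi> x = \<alpha> x" if "x \<in> C" for x
      using \<alpha> that by (auto dest: fun_cong[of _ _ x])
    ultimately show "override_on (restrict \<alpha> ?F) \<phi> C = \<alpha>"
      by (auto simp: override_on_def fun_eq_iff)
  qed
  show "\<forall>g\<in>list_colourings ?F L ?T. restrict (override_on g \<phi> C) ?F = g"
  proof
    fix g assume "g \<in> list_colourings ?F L ?T"
    then have "g \<in> ?F \<rightarrow>\<^sub>E ?T" by (simp add: list_colourings_def)
    then have "g x = undefined" if "x \<notin> ?F" for x using that by (rule PiE_arb)
    then show "restrict (override_on g \<phi> C) ?F = g"
      by (auto simp: override_on_def fun_eq_iff)
  qed
  show "(\<lambda>\<alpha>. restrict \<alpha> ?F) ` ?fibre \<subseteq> list_colourings ?F L ?T"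
  proof (rule image_subsetI)
    fix \<alpha> assume "\<alpha> \<in> ?fibre"
    then have "\<alpha> \<in> list_colourings V L Y" "\<alpha> ` C = \<phi> ` C"
      using image_restrict_eq[of \<alpha> C] by auto
    moreover have "V - ?F = C" using assms(1) by blast
    ultimately show "restrict \<alpha> ?F \<in> list_colourings ?F L ?T"
      using restrict_in_list_colourings[of \<alpha> V L Y ?F] by (metis Diff_subset)
  qed
  show "(\<lambda>g. override_on g \<phi> C) ` list_colourings ?F L ?T \<subseteq> ?fibre"
  proof (rule image_subsetI)
    fix g assume "g \<in> list_colourings ?F L ?T"
    then have "override_on g \<phi> C \<in> list_colourings (C \<union> ?F) L Y"
      by (rule override_on_in_list_colourings[OF \<phi>])
    moreover have "C \<union> ?F = V" using assms(1) by blast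
    moreover have "restrict (override_on g \<phi> C) C = \<phi>"
      using \<phi> PiE_arb[of \<phi> C] by (auto simp: list_colourings_def override_on_def fun_eq_iff)
    ultimately show "override_on g \<phi> C \<in> ?fibre" by simp
  qed
qed

lemma card_list_colourings_extending:
  assumes "finite V" "finite Y" "C \<subseteq> V" "\<And>v. v \<in> V - C \<Longrightarrow> Y \<subseteq> L v"
    and \<phi>: "\<phi> \<in> list_colourings C L Y"
  shows "card {\<alpha> \<in> list_colourings V L Y. restrict \<alpha> C = \<phi>}
    = prod ((-) (card Y - card C)) {0..<card (V - C)}"
proof -
  let ?F = "V - C" and ?T = "Y - \<phi> ` C"
  have "finite C" using assms(1,3) by (rule finite_subset[rotated])
  moreover have "\<phi> ` C \<subseteq> Y" "inj_on \<phi> C" using \<phi> by (auto simp: list_colourings_def)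
  ultimately have card_T: "card ?T = card Y - card C" by (simp add: card_Diff_subset card_image)
  have "(\<Pi>\<^sub>E v\<in>?F. L v \<inter> ?T) = ?F \<rightarrow>\<^sub>E ?T" using assms(4) by (intro PiE_cong) blast
  then have free: "list_colourings ?F L ?T = {g \<in> ?F \<rightarrow>\<^sub>E ?T. inj_on g ?F}"
    by (simp add: list_colourings_eq_PiE)
  have "card {\<alpha> \<in> list_colourings V L Y. restrict \<alpha> C = \<phi>} = card (list_colourings ?F L ?T)"
    using bij_betw_restrict_extensions[OF assms(3) \<phi>] by (rule bij_betw_same_card)
  also have "\<dots> = prod ((-) (card Y - card C)) {0..<card ?F}"
    using card_inj_on_subset_funcset[of ?F ?T ?F] assms(1,2) card_T by (simp add: free)
  finally show ?thesis .
qed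

lemma card_list_colourings_restricting_into:
  assumes "finite V" "finite Y" "C \<subseteq> V" "\<And>v. v \<in> V - C \<Longrightarrow> Y \<subseteq> L v"
    and P: "P \<subseteq> list_colourings C L Y"
  shows "card {\<alpha> \<in> list_colourings V L Y. restrict \<alpha> C \<in> P}
    = card P * prod ((-) (card Y - card C)) {0..<card (V - C)}"
proof -
  have "finite C" using assms(1,3) by (rule finite_subset[rotated])
  then have "finite P" using P assms(2) finite_list_colourings finite_subset by blast
  have "{\<alpha> \<in> list_colourings V L Y. restrict \<alpha> C \<in> P}
      = (\<Union>\<phi>\<in>P. {\<alpha> \<in> list_colourings V L Y. restrict \<alpha> C = \<phi>})" by blast
  also have "card \<dots> = (\<Sum>\<phi>\<in>P. card {\<alpha> \<in> list_colourings V L Y. restrict \<alpha> C = \<phi>})"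
    using \<open>finite P\<close> assms(1,2) by (intro card_UN_disjoint) (auto simp: finite_list_colourings)
  also have "\<dots> = (\<Sum>\<phi>\<in>P. prod ((-) (card Y - card C)) {0..<card (V - C)})"
    using P assms(1-4) by (intro sum.cong refl card_list_colourings_extending) auto
  finally show ?thesis by simp
qed

lemma card_list_colourings_le_card_extensions:
  assumes \<phi>: "\<phi> \<in> list_colourings A L Y" and "\<phi> ` A \<subseteq> S" "A \<inter> B = {}" "finite (A \<union> B)" "finite Y"
  shows "card (list_colourings B L (Y - S))
    \<le> card {\<phi>' \<in> list_colourings (A \<union> B) L Y. (\<forall>a\<in>A. \<phi>' a = \<phi> a) \<and> \<phi>' ` B \<inter> S = {}}"
proof (rule card_inj_on_le[where f = "\<lambda>\<psi>. override_on \<psi> \<phi> A"])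
  show "(\<lambda>\<psi>. override_on \<psi> \<phi> A) ` list_colourings B L (Y - S)
    \<subseteq> {\<phi>' \<in> list_colourings (A \<union> B) L Y. (\<forall>a\<in>A. \<phi>' a = \<phi> a) \<and> \<phi>' ` B \<inter> S = {}}"
  proof (rule image_subsetI)
    fix \<psi> assume \<psi>: "\<psi> \<in> list_colourings B L (Y - S)"
    then have "\<psi> \<in> list_colourings B L (Y - \<phi> ` A)"
      using list_colourings_mono[of "Y - S" "Y - \<phi> ` A"] assms(2) by blast
    then have "override_on \<psi> \<phi> A \<in> list_colourings (A \<union> B) L Y"
      by (rule override_on_in_list_colourings[OF \<phi>])
    moreover have "override_on \<psi> \<phi> A ` B \<inter> S = {}"
      using \<psi> assms(3) by (auto simp: list_colourings_def PiE_iff override_on_def)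
    ultimately show "override_on \<psi> \<phi> A
      \<in> {\<phi>' \<in> list_colourings (A \<union> B) L Y. (\<forall>a\<in>A. \<phi>' a = \<phi> a) \<and> \<phi>' ` B \<inter> S = {}}" by simp
  qed
  show "inj_on (\<lambda>\<psi>. override_on \<psi> \<phi> A) (list_colourings B L (Y - S))"
  proof (rule inj_on_inverseI[where g = "\<lambda>\<phi>'. restrict \<phi>' B"])
    fix \<psi> assume "\<psi> \<in> list_colourings B L (Y - S)"
    then have "\<psi> \<in> B \<rightarrow>\<^sub>E Y - S" by (simp add: list_colourings_def)
    then have "\<psi> x = undefined" if "x \<notin> B" for x using that by (rule PiE_arb)
    then show "restrict (override_on \<psi> \<phi> A) B = \<psi>"
      using assms(3) by (auto simp: fun_eq_iff override_on_def)
  qed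
  show "finite {\<phi>' \<in> list_colourings (A \<union> B) L Y. (\<forall>a\<in>A. \<phi>' a = \<phi> a) \<and> \<phi>' ` B \<inter> S = {}}"
    using assms(4,5) by (simp add: finite_list_colourings)
qed

lemma bij_betw_ext_col:
  assumes "\<alpha> \<in> L_colourings d L"
  shows "bij_betw (ext_col d \<alpha>) {0..d} {1..d+1}"
proof -
  have \<alpha>: "inj_on \<alpha> {1..d}" "\<alpha> ` {1..d} \<subseteq> {1..d+1}"
    using assms by (auto simp: L_colourings_def)
  then have "card ({1..d+1} - \<alpha> ` {1..d}) = 1"
    by (simp add: card_Diff_subset card_image)
  then obtain m where m: "{1..d+1} - \<alpha> ` {1..d} = {m}" by (rule card_1_singletonE)
  have "bij_betw (ext_col d \<alpha>) {1..d} (\<alpha> ` {1..d})"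
    using inj_on_imp_bij_betw[OF \<alpha>(1)] by (rule bij_betw_cong[THEN iffD2, rotated]) (simp add: ext_col_def)
  moreover have "ext_col d \<alpha> 0 = m" using m by (simp add: ext_col_def)
  ultimately have "bij_betw (ext_col d \<alpha>) ({1..d} \<union> {0}) (\<alpha> ` {1..d} \<union> {m})"
    using m notIn_Un_bij_betw[of 0 "{1..d}" "ext_col d \<alpha>" "\<alpha> ` {1..d}"] by auto
  moreover have "{1..d} \<union> {0} = {0..d}" by auto
  moreover have "\<alpha> ` {1..d} \<union> {m} = {1..d+1}" using m \<alpha>(2) by blast
  ultimately show ?thesis by simp
qed

lemma perm_f_eq_the_inv_into:
  "perm_f d \<alpha> \<beta> x = the_inv_into {0..d} (ext_col d \<beta>) (ext_col d \<alpha> x)"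
  unfolding perm_f_def the_inv_into_def by (metis)

lemma bij_betw_perm_f:
  assumes "\<alpha> \<in> L_colourings d L" "\<beta> \<in> L_colourings d L"
  shows "bij_betw (perm_f d \<alpha> \<beta>) {0..d} {0..d}"
proof -
  have "bij_betw (the_inv_into {0..d} (ext_col d \<beta>) \<circ> ext_col d \<alpha>) {0..d} {0..d}"
    using bij_betw_ext_col[OF assms(1)] bij_betw_the_inv_into[OF bij_betw_ext_col[OF assms(2)]]
    by (rule bij_betw_trans)
  then show ?thesis by (simp add: comp_def perm_f_eq_the_inv_into[abs_def])
qed

lemma ext_col_perm_f:
  assumes "\<alpha> \<in> L_colourings d L" "\<beta> \<in> L_colourings d L" "x \<in> {0..d}"
  shows "ext_col d \<beta> (perm_f d \<alpha> \<beta> x) = ext_col d \<alpha> x"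
  unfolding perm_f_eq_the_inv_into
  using assms bij_betw_ext_col bij_betwE by (intro f_the_inv_into_f_bij_betw) blast+

lemma perm_f_colour:
  assumes "\<alpha> \<in> L_colourings d L" "\<beta> \<in> L_colourings d L" "x \<in> {1..d}" "perm_f d \<alpha> \<beta> x \<in> {1..d}"
  shows "\<beta> (perm_f d \<alpha> \<beta> x) = \<alpha> x"
  using ext_col_perm_f[OF assms(1,2), of x] assms(3,4) by (simp add: ext_col_def)

lemma perm_f_fixes_agreement:
  assumes "\<alpha> \<in> L_colourings d L" "\<beta> \<in> L_colourings d L" "x \<in> {1..d}" "\<alpha> x = \<beta> x"
  shows "perm_f d \<alpha> \<beta> x = x"
proof -
  have "ext_col d \<beta> x = ext_col d \<alpha> x" using assms(3,4) by (simp add: ext_col_def)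
  then show ?thesis
    unfolding perm_f_eq_the_inv_into using bij_betw_ext_col[OF assms(2)] assms(3)
    by (intro the_inv_into_f_eq) (auto simp: bij_betw_def)
qed

lemma inj_on_image_not_fixed:
  assumes "inj_on f S" "x \<in> S" "f x \<in> S" "f x \<noteq> x"
  shows "f (f x) \<noteq> f x"
  using assms inj_onD by metis

lemma good_pair_if_orbits_in:
  assumes \<alpha>: "\<alpha> \<in> L_colourings d L" and \<beta>: "\<beta> \<in> L_colourings d L"
    and "finite A" and few: "card {u\<in>A. \<alpha> u \<noteq> \<beta> u} \<le> 1"
    and in_A: "\<And>z. constrained d L z \<Longrightarrow> constrained d L (perm_f d \<alpha> \<beta> z) \<Longrightarrow>
      constrained d L (perm_f d \<alpha> \<beta> (perm_f d \<alpha> \<beta> z)) \<Longrightarrow> perm_f d \<alpha> \<beta> z \<in> A"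
  shows "good_pair d L \<alpha> \<beta>"
  unfolding good_pair_def
proof
  let ?f = "perm_f d \<alpha> \<beta>"
  assume "\<exists>x\<in>{0..d}. ?f x \<noteq> x \<and> (\<forall>k. constrained d L ((?f ^^ k) x))"
  then obtain x where x: "x \<in> {0..d}" "?f x \<noteq> x" and orbit: "\<And>k. constrained d L ((?f ^^ k) x)"
    by blast
  define y where "y = ?f x"
  define z where "z = ?f y"
  have "constrained d L x" "constrained d L y" "constrained d L z" "constrained d L (?f z)"
    using orbit[of 0] orbit[of 1] orbit[of 2] orbit[of 3]
    by (simp_all add: y_def z_def numeral_eq_Suc)
  then have "y \<in> A" "z \<in> A" and yz: "y \<in> {1..d}" "z \<in> {1..d}"
    using in_A by (auto simp: y_def z_def constrained_def)
  have inj: "inj_on ?f {0..d}" using bij_betw_perm_f[OF \<alpha> \<beta>] by (rule bij_betw_imp_inj_on)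
  have "?f y \<noteq> y" using inj_on_image_not_fixed[OF inj x(1) _ x(2)] yz by (simp add: y_def)
  moreover have "?f z \<noteq> z" using inj_on_image_not_fixed[OF inj _ _ \<open>?f y \<noteq> y\<close>] yz by (simp add: z_def)
  ultimately have "\<alpha> y \<noteq> \<beta> y" "\<alpha> z \<noteq> \<beta> z" "y \<noteq> z"
    using perm_f_fixes_agreement[OF \<alpha> \<beta>] yz by (auto simp: z_def)
  then show False
    using few \<open>y \<in> A\<close> \<open>z \<in> A\<close> \<open>finite A\<close> card_le_Suc0_iff_eq[of "{u\<in>A. \<alpha> u \<noteq> \<beta> u}"] by auto
qed

lemma good_pairs_if_avoiding:
  assumes \<alpha>: "\<alpha> \<in> L_colourings d L" and \<beta>: "\<beta> \<in> L_colourings d L" and \<xi>: "\<xi> \<in> L_colourings d L"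
    and "finite A" and agree: "\<forall>u\<in>A. \<xi> u = \<xi>A u"
    and few: "card {u\<in>A. \<alpha> u \<noteq> \<xi>A u} \<le> 1" "card {u\<in>A. \<xi>A u \<noteq> \<beta> u} \<le> 1"
    and avoid: "\<xi> ` (Collect (constrained d L) - A) \<inter>
      (\<alpha> ` Collect (constrained d L) \<union> \<beta> ` Collect (constrained d L)) = {}"
  shows "good_pair d L \<alpha> \<xi> \<and> good_pair d L \<xi> \<beta>"
proof
  have "{u\<in>A. \<alpha> u \<noteq> \<xi> u} = {u\<in>A. \<alpha> u \<noteq> \<xi>A u}" "{u\<in>A. \<xi> u \<noteq> \<beta> u} = {u\<in>A. \<xi>A u \<noteq> \<beta> u}"
    using agree by auto
  with few have few\<xi>: "card {u\<in>A. \<alpha> u \<noteq> \<xi> u} \<le> 1" "card {u\<in>A. \<xi> u \<noteq> \<beta> u} \<le> 1"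
    by simp_all
  show "good_pair d L \<alpha> \<xi>"
  proof (rule good_pair_if_orbits_in[OF \<alpha> \<xi> \<open>finite A\<close> few\<xi>(1)])
    fix z assume z: "constrained d L z" "constrained d L (perm_f d \<alpha> \<xi> z)"
    then have "\<xi> (perm_f d \<alpha> \<xi> z) = \<alpha> z"
      by (intro perm_f_colour[OF \<alpha> \<xi>]) (auto simp: constrained_def)
    then show "perm_f d \<alpha> \<xi> z \<in> A" using avoid z by blast
  qed
  show "good_pair d L \<xi> \<beta>"
  proof (rule good_pair_if_orbits_in[OF \<xi> \<beta> \<open>finite A\<close> few\<xi>(2)])
    let ?f = "perm_f d \<xi> \<beta>"
    fix z assume z: "constrained d L (?f z)" "constrained d L (?f (?f z))"
    then have "\<beta> (?f (?f z)) = \<xi> (?f z)"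
      by (intro perm_f_colour[OF \<xi> \<beta>]) (auto simp: constrained_def)
    then show "?f z \<in> A" using avoid z by blast
  qed
qed

lemma t_feasible_constrained_subset:
  assumes "t_feasible d t L"
  shows "Collect (constrained d L) \<subseteq> {1..t}"
  using assms unfolding t_feasible_def constrained_def by (auto simp: not_le[symmetric])

lemma t_feasible_free_list:
  assumes "t_feasible d t L" "u \<in> {1..d}" "\<not> constrained d L u"
  shows "L u = {1..d+1}"
proof (rule card_subset_eq)
  show "L u \<subseteq> {1..d+1}" using assms(1,2) by (simp add: t_feasible_def)
  show "card (L u) = card {1..d+1}" using assms(2,3) by (simp add: constrained_def)
qed simp

lemma L_colourings_uniform_fibres:
  assumes "t_feasible d t L"
  obtains N where "\<And>P. P \<subseteq> list_colourings (Collect (constrained d L)) L {1..d+1} \<Longrightarrow>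
      card {\<alpha> \<in> L_colourings d L. restrict \<alpha> (Collect (constrained d L)) \<in> P} = card P * N"
    and "card (L_colourings d L) = card (list_colourings (Collect (constrained d L)) L {1..d+1}) * N"
proof -
  let ?C = "Collect (constrained d L)" and ?Y = "{1..d+1}"
  let ?N = "prod ((-) (card ?Y - card ?C)) {0..<card ({1..d} - ?C)}"
  have "?C \<subseteq> {1..d}" by (auto simp: constrained_def)
  moreover have "?Y \<subseteq> L v" if "v \<in> {1..d} - ?C" for v
    using t_feasible_free_list[OF assms] that by simp
  ultimately have fibres: "card {\<alpha> \<in> L_colourings d L. restrict \<alpha> ?C \<in> P} = card P * ?N"
    if "P \<subseteq> list_colourings ?C L ?Y" for P
    using that unfolding L_colourings_eq_list_colourings
    by (intro card_list_colourings_restricting_into) auto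
  have "restrict \<alpha> ?C \<in> list_colourings ?C L ?Y" if "\<alpha> \<in> L_colourings d L" for \<alpha>
    using restrict_in_list_colourings[OF _ \<open>?C \<subseteq> {1..d}\<close>] list_colourings_mono[OF Diff_subset] that
    by (simp add: L_colourings_eq_list_colourings) blast
  then have "{\<alpha> \<in> L_colourings d L. restrict \<alpha> ?C \<in> list_colourings ?C L ?Y} = L_colourings d L"
    by blast
  then have "card (L_colourings d L) = card (list_colourings ?C L ?Y) * ?N"
    using fibres[OF subset_refl] by simp
  with fibres show ?thesis by (rule that)
qed

lemma card_list_colourings_le_avoiding:
  fixes m t :: nat
  assumes "finite C" "A \<subseteq> C" "card C \<le> t" "0 < m" "finite Y" "finite S" "card S \<le> 3 * t"
    and lists: "\<And>u. u \<in> C \<Longrightarrow> L u \<subseteq> Y"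
    and small: "\<And>a. a \<in> A \<Longrightarrow> card (L a) \<le> m"
    and large: "\<And>b. b \<in> C - A \<Longrightarrow> 6 * t \<le> card (L b)"
  shows "card (list_colourings C L Y) \<le> m ^ t * 3 ^ t * card (list_colourings (C - A) L (Y - S))"
proof -
  let ?B = "C - A"
  have "card A \<le> t" using card_mono[OF assms(1,2)] assms(3) by linarith
  have "card ?B \<le> t" using card_mono[OF assms(1), of ?B] assms(3) by auto
  have small_part: "(\<Prod>a\<in>A. card (L a)) \<le> m ^ t"
    using small \<open>card A \<le> t\<close> \<open>0 < m\<close> by (intro prod_le_power) auto
  have large_part: "(\<Prod>b\<in>?B. card (L b)) \<le> 3 ^ t * card (list_colourings ?B L (Y - S))"
  proof -
    have "card (L b) \<le> 3 * (card (L b \<inter> (Y - S)) - t)" if "b \<in> ?B" for b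
    proof -
      have "L b \<inter> (Y - S) = L b - S" using lists that by blast
      then have "card (L b) - card S \<le> card (L b \<inter> (Y - S))"
        using diff_card_le_card_Diff[OF \<open>finite S\<close>] by simp
      then show ?thesis using large[OF that] \<open>card S \<le> 3 * t\<close> by linarith
    qed
    then have "(\<Prod>b\<in>?B. card (L b)) \<le> (\<Prod>b\<in>?B. 3 * (card (L b \<inter> (Y - S)) - t))"
      by (intro prod_mono) auto
    also have "\<dots> = 3 ^ card ?B * (\<Prod>b\<in>?B. card (L b \<inter> (Y - S)) - t)"
      by (simp add: prod.distrib)
    also have "\<dots> \<le> 3 ^ t * card (list_colourings ?B L (Y - S))"
      using \<open>card ?B \<le> t\<close> assms(1,5)
      by (intro mult_le_mono power_increasing card_list_colourings_ge) auto
    finally show ?thesis .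
  qed
  have "card (list_colourings C L Y) \<le> (\<Prod>u\<in>C. card (L u))"
    using assms(1,5) lists by (intro card_list_colourings_le) (auto intro: finite_subset)
  also have "\<dots> = (\<Prod>b\<in>?B. card (L b)) * (\<Prod>a\<in>A. card (L a))"
    using assms(2,1) by (rule prod.subset_diff)
  also have "\<dots> \<le> (3 ^ t * card (list_colourings ?B L (Y - S))) * m ^ t"
    using large_part small_part by (rule mult_le_mono)
  finally show ?thesis by (simp add: ac_simps)
qed

lemma card_Un_images_le:
  assumes "finite C" "A \<subseteq> C"
  shows "card (f ` C \<union> g ` C \<union> h ` A) \<le> 3 * card C"
proof -
  have "card (f ` C \<union> g ` C \<union> h ` A) \<le> card (f ` C) + card (g ` C) + card (h ` A)"
    by (meson card_Un_le add_le_mono1 order_trans)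
  also have "\<dots> \<le> card C + card C + card A"
    using assms by (intro add_mono card_image_le) (auto intro: finite_subset)
  finally show ?thesis using card_mono[OF assms] by linarith
qed

lemma card_L_colourings_le_good_extensions:
  assumes tf: "t_feasible d t L" and \<alpha>: "\<alpha> \<in> L_colourings d L" and \<beta>: "\<beta> \<in> L_colourings d L"
    and \<xi>A: "inj_on \<xi>A A" "\<xi>A ` A \<subseteq> {1..d+1}" "\<forall>u\<in>A. \<xi>A u \<in> L u"
    and few: "card {u\<in>A. \<alpha> u \<noteq> \<xi>A u} \<le> 1" "card {u\<in>A. \<xi>A u \<noteq> \<beta> u} \<le> 1"
    and A_def: "A = {u. constrained d L u \<and> card (L u) \<le> 2 * (3 * t + 2)}"
  shows "card (L_colourings d L) \<le> (6 * t + 4) ^ t * 3 ^ t *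
    card {\<xi> \<in> L_colourings d L. (\<forall>u\<in>A. \<xi> u = \<xi>A u) \<and> good_pair d L \<alpha> \<xi> \<and> good_pair d L \<xi> \<beta>}"
    (is "_ \<le> ?K * card ?Good")
proof -
  define Y C where "Y = {1..d+1}" and "C = Collect (constrained d L)"
  define S where "S = \<alpha> ` C \<union> \<beta> ` C \<union> \<xi>A ` A"
  define P where "P = {\<phi> \<in> list_colourings C L Y. (\<forall>u\<in>A. \<phi> u = \<xi>A u) \<and> \<phi> ` (C - A) \<inter> S = {}}"
  obtain N where fibres: "\<And>P. P \<subseteq> list_colourings C L Y \<Longrightarrow>
      card {\<alpha> \<in> L_colourings d L. restrict \<alpha> C \<in> P} = card P * N"
    and card_all: "card (L_colourings d L) = card (list_colourings C L Y) * N"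
    using L_colourings_uniform_fibres[OF tf] by (auto simp: C_def Y_def)
  have "C \<subseteq> {1..t}" using t_feasible_constrained_subset[OF tf] by (simp add: C_def)
  then have "finite C" "card C \<le> t" by (auto dest: finite_subset card_mono[rotated])
  have "A \<subseteq> C" by (auto simp: A_def C_def)
  then have "finite A" using \<open>finite C\<close> by (rule finite_subset)
  have lists: "L u \<subseteq> Y" if "u \<in> C" for u
    using tf that by (auto simp: t_feasible_def Y_def C_def constrained_def)
  have "finite S" using \<open>finite C\<close> \<open>finite A\<close> by (simp add: S_def)
  have "card S \<le> 3 * t"
    using card_Un_images_le[OF \<open>finite C\<close> \<open>A \<subseteq> C\<close>, of \<alpha> \<beta> \<xi>A] \<open>card C \<le> t\<close>
    unfolding S_def by linarith
  have "card (L_colourings d L) = card (list_colourings C L Y) * N" by (rule card_all)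
  also have "\<dots> \<le> ?K * card (list_colourings (C - A) L (Y - S)) * N"
  proof -
    have "card (L a) \<le> 6 * t + 4" if "a \<in> A" for a using that by (simp add: A_def)
    moreover have "6 * t \<le> card (L b)" if "b \<in> C - A" for b using that by (auto simp: A_def C_def)
    ultimately show ?thesis
      using card_list_colourings_le_avoiding[where L = L, OF \<open>finite C\<close> \<open>A \<subseteq> C\<close> \<open>card C \<le> t\<close> _ _
          \<open>finite S\<close> \<open>card S \<le> 3 * t\<close> lists] by (simp add: Y_def)
  qed
  also have "\<dots> \<le> ?K * card P * N"
  proof -
    have "restrict \<xi>A A \<in> list_colourings A L Y"
      using \<xi>A by (auto simp: list_colourings_def Y_def inj_on_def)
    then have "card (list_colourings (C - A) L (Y - S)) \<le> card P"
      using card_list_colourings_le_card_extensions[of "restrict \<xi>A A" A L Y S "C - A"]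
        \<open>A \<subseteq> C\<close> \<open>finite C\<close> by (simp add: P_def S_def Y_def Un_absorb1)
    then show ?thesis by simp
  qed
  also have "\<dots> = ?K * card {\<xi> \<in> L_colourings d L. restrict \<xi> C \<in> P}"
    using fibres[of P] by (simp add: P_def)
  also have "\<dots> \<le> ?K * card ?Good"
  proof -
    have "{\<xi> \<in> L_colourings d L. restrict \<xi> C \<in> P} \<subseteq> ?Good"
    proof
      fix \<xi> assume "\<xi> \<in> {\<xi> \<in> L_colourings d L. restrict \<xi> C \<in> P}"
      then have \<xi>: "\<xi> \<in> L_colourings d L" "\<forall>u\<in>A. \<xi> u = \<xi>A u" "\<xi> ` (C - A) \<inter> S = {}"
        using \<open>A \<subseteq> C\<close> by (auto simp: P_def subset_iff)
      then have "good_pair d L \<alpha> \<xi> \<and> good_pair d L \<xi> \<beta>"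
        by (intro good_pairs_if_avoiding[OF \<alpha> \<beta> \<xi>(1) \<open>finite A\<close> \<xi>(2) few]) (auto simp: S_def C_def)
      then show "\<xi> \<in> ?Good" using \<xi> by simp
    qed
    moreover have "finite (L_colourings d L)"
      by (simp add: L_colourings_eq_list_colourings finite_list_colourings)
    ultimately show ?thesis by (simp add: card_mono)
  qed
  finally show ?thesis .
qed

theorem lemma16:
  "\<forall>t::nat. t > 0 \<longrightarrow> (\<exists>c::real. c > 0 \<and>
     (\<forall>d::nat. \<forall>L \<alpha> \<beta> (\<xi>A :: nat \<Rightarrow> nat).
        let A = {u. constrained d L u \<and> card (L u) \<le> 2 * (3 * t + 2)} in
        d \<ge> 1 \<longrightarrow> t_feasible d t L \<longrightarrow>
        \<alpha> \<in> L_colourings d L \<longrightarrow> \<beta> \<in> L_colourings d L \<longrightarrow>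
        inj_on \<xi>A A \<longrightarrow> \<xi>A ` A \<subseteq> {1..d+1} \<longrightarrow> (\<forall>u\<in>A. \<xi>A u \<in> L u) \<longrightarrow>
        card {u\<in>A. \<alpha> u \<noteq> \<xi>A u} \<le> 1 \<longrightarrow>
        card {u\<in>A. \<xi>A u \<noteq> \<beta> u} \<le> 1 \<longrightarrow>
        real (card {\<xi> \<in> L_colourings d L. (\<forall>u\<in>A. \<xi> u = \<xi>A u) \<and>
                       good_pair d L \<alpha> \<xi> \<and> good_pair d L \<xi> \<beta>})
          \<ge> c * real (card (L_colourings d L))))"
  apply (intro allI impI)
  subgoal for t
    apply (rule exI[of _ "1 / real ((6 * t + 4) ^ t * 3 ^ t)"])
    using card_L_colourings_le_good_extensions[where t = t]
    by (auto simp: Let_def divide_simps mult.commute simp flip: of_nat_mult intro!: of_nat_mono)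
  done

end
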